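(* Consider an NCG whose consumption price functions are $\tau_a(t)=\gamma_a t^{\beta}+\eta_a$ with constants $\gamma_a>0$, $\eta_a>0$ ($a\in A$) and $\beta\ge0$ independent of $a$. For a user volume vector $d$ let $d_{\min}=\min\{d_k:k=1,\dots,K\}$. Then there is a constant $c>0$ depending only on the game structure ($A$, $\mathcal S$, $r$, $\gamma_a$, $\eta_a$, $\beta$) such that for every user volume vector $d$ with $d_{\min}>0$, every SO-profile for $d$ is an $\epsilon$-approximate NE-profile with $\epsilon=c\, d_{\min}^{-\beta}$; that is, SO-profiles are $O(d_{\min}^{-\beta})$-approximate NE-profiles.
   Context: A non-atomic congestion game (NCG) consists of: a finite set $A$ of resources; an integer $K\ge 1$ of user groups; pairwise disjoint finite nonempty strategy sets $\mathcal S_1,\dots,\mathcal S_K$, $\mathcal S=\bigcup_k\mathcal S_k$; constants $r(a,s)\ge 0$ with $\sum_{a} r(a,s)>0$ for every $s$ and $\sum_{s} r(a,s)>0$ for every $a$; continuous nondecreasing consumption price functions $\tau_a:[0,\infty)\to[0,\infty)$; and a user volume vector $d\in\mathbb R_{\ge0}^K$. A feasible profile for $d$ is $f=(f_s)_{s\in\mathcal S}$, $f_s\ge0$, $\sum_{s\in\mathcal S_k}f_s=d_k$; loads $f_a=\sum_s r(a,s)f_s$, strategy prices $\tau_s(f)=\sum_a r(a,s)\tau_a(f_a)$, cost $C(f)=\sum_a f_a\tau_a(f_a)$. An SO-profile is a feasible profile minimizing $C$. For $\epsilon>0$, a feasible profile $f$ is an $\epsilon$-approximate NE-profile if for every $k$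 and all $s,s'\in\mathcal S_k$ with $f_s>0$, $\tau_s(f)\le(1+\epsilon)\tau_{s'}(f)$. (Routing games with BPR travel times $\tau_a(x)=\tau_a(0)(1+\alpha(x/u_a)^\beta)$ are the motivating special case.) *)

theory Defs
  imports Complex_Main
begin

text \<open>Profiles are functions on strategies; only their
values on the strategies in the union of the S k matter.\<close>

definition strategies :: "nat \<Rightarrow> (nat \<Rightarrow> 's set) \<Rightarrow> 's set" where
  "strategies K S = (\<Union>k<K. S k)"

definition feasible ::
  "nat \<Rightarrow> (nat \<Rightarrow> 's set) \<Rightarrow> (nat \<Rightarrow> real) \<Rightarrow> ('s \<Rightarrow> real) \<Rightarrow> bool" where
  "feasible K S d f \<longleftrightarrow>
     (\<forall>s\<in>strategies K S. f s \<ge> 0) \<and> (\<forall>k<K. (\<Sum>s\<in>S k. f s) = d k)"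

definition load ::
  "nat \<Rightarrow> (nat \<Rightarrow> 's set) \<Rightarrow> ('a \<Rightarrow> 's \<Rightarrow> real) \<Rightarrow> ('s \<Rightarrow> real) \<Rightarrow> 'a \<Rightarrow> real" where
  "load K S r f a = (\<Sum>s\<in>strategies K S. r a s * f s)"

definition strat_price ::
  "'a set \<Rightarrow> nat \<Rightarrow> (nat \<Rightarrow> 's set) \<Rightarrow> ('a \<Rightarrow> 's \<Rightarrow> real) \<Rightarrow> ('a \<Rightarrow> real \<Rightarrow> real)
   \<Rightarrow> ('s \<Rightarrow> real) \<Rightarrow> 's \<Rightarrow> real" where
  "strat_price A K S r \<tau> f s = (\<Sum>a\<in>A. r a s * \<tau> a (load K S r f a))"

definition total_cost ::
  "'a set \<Rightarrow> nat \<Rightarrow> (nat \<Rightarrow> 's set) \<Rightarrow> ('a \<Rightarrow> 's \<Rightarrow> real) \<Rightarrow> ('a \<Rightarrow> real \<Rightarrow> real)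
   \<Rightarrow> ('s \<Rightarrow> real) \<Rightarrow> real" where
  "total_cost A K S r \<tau> f = (\<Sum>a\<in>A. load K S r f a * \<tau> a (load K S r f a))"

definition SO_profile ::
  "'a set \<Rightarrow> nat \<Rightarrow> (nat \<Rightarrow> 's set) \<Rightarrow> ('a \<Rightarrow> 's \<Rightarrow> real) \<Rightarrow> ('a \<Rightarrow> real \<Rightarrow> real)
   \<Rightarrow> (nat \<Rightarrow> real) \<Rightarrow> ('s \<Rightarrow> real) \<Rightarrow> bool" where
  "SO_profile A K S r \<tau> d f \<longleftrightarrow> feasible K S d f \<and>
     (\<forall>g. feasible K S d g \<longrightarrow> total_cost A K S r \<tau> f \<le> total_cost A K S r \<tau> g)"

definition approx_NE_profile ::
  "'a set \<Rightarrow> nat \<Rightarrow> (nat \<Rightarrow> 's set) \<Rightarrow> ('a \<Rightarrow> 's \<Rightarrow> real) \<Rightarrow> ('a \<Rightarrow> real \<Rightarrow> real)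
   \<Rightarrow> (nat \<Rightarrow> real) \<Rightarrow> real \<Rightarrow> ('s \<Rightarrow> real) \<Rightarrow> bool" where
  "approx_NE_profile A K S r \<tau> d \<epsilon> f \<longleftrightarrow> feasible K S d f \<and>
     (\<forall>k<K. \<forall>s\<in>S k. \<forall>s'\<in>S k. f s > 0 \<longrightarrow>
        strat_price A K S r \<tau> f s \<le> (1 + \<epsilon>) * strat_price A K S r \<tau> f s')"

text \<open>Real power t^beta for t \<ge> 0 and beta \<ge> 0, with the convention 0^0 = 1
(Isabelle's powr has 0 powr 0 = 0).\<close>
definition rpow :: "real \<Rightarrow> real \<Rightarrow> real" where
  "rpow t \<beta> = (if \<beta> = 0 then 1 else t powr \<beta>)"

end

theory Submission
  imports Defs "HOL-Analysis.Analysis"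
begin

text \<open>An SO-profile satisfies the Karush-Kuhn-Tucker conditions: within a group, a used
strategy has minimal marginal price, the marginal price of a resource being
\<open>(1 + \<beta>) \<gamma>\<^sub>a x\<^sup>\<beta> + \<eta>\<^sub>a\<close>. As the marginal price of a strategy equals \<open>1 + \<beta>\<close> times its price
minus \<open>\<beta>\<close> times its fixed part \<open>\<Sum>\<^sub>a r(a,s) \<eta>\<^sub>a\<close>, the price of a used strategy exceeds that
of any other strategy of its group by at most a constant. On the other hand some strategy of
every group carries flow at least \<open>d\<^sub>m\<^sub>i\<^sub>n / |\<S>|\<close>, so its price, and by the KKT conditions
that of every strategy of the group, is of order at least \<open>d\<^sub>m\<^sub>i\<^sub>n\<^sup>\<beta>\<close>. Hence the relative gap
is \<open>O(d\<^sub>m\<^sub>i\<^sub>n\<^sup>-\<^sup>\<beta>)\<close>.\<close>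

lemma rpow_nonneg: "0 \<le> t \<Longrightarrow> 0 \<le> rpow t \<beta>"
  by (simp add: rpow_def)

lemma rpow_eq_powr: "0 < t \<Longrightarrow> rpow t \<beta> = t powr \<beta>"
  by (simp add: rpow_def)

lemma rpow_mono: "0 \<le> \<beta> \<Longrightarrow> 0 \<le> t \<Longrightarrow> t \<le> u \<Longrightarrow> rpow t \<beta> \<le> rpow u \<beta>"
  by (simp add: rpow_def powr_mono2)

lemma tendsto_rpow:
  assumes "0 \<le> \<beta>" "(g \<longlongrightarrow> t) F" "\<forall>\<^sub>F x in F. 0 \<le> g x"
  shows "((\<lambda>x. rpow (g x) \<beta>) \<longlongrightarrow> rpow t \<beta>) F"
  using assms by (cases "\<beta> = 0") (auto simp: rpow_def intro!: tendsto_powr')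

lemma mult_rpow_above_tangent:
  fixes t u \<beta> :: real
  assumes "0 \<le> \<beta>" "0 \<le> t" "0 \<le> u"
  shows "u * rpow u \<beta> + (1 + \<beta>) * rpow u \<beta> * (t - u) \<le> t * rpow t \<beta>"
proof (cases "\<beta> = 0")
  case False
  then have "0 < \<beta>" using assms(1) by simp
  have pow: "z * rpow z \<beta> = z powr (1 + \<beta>)" if "0 \<le> z" for z
    using that False by (auto simp: rpow_def powr_add)
  consider "u = 0" | "t = 0" "0 < u" | "0 < t" "0 < u" using assms by linarith
  then show ?thesis
  proof cases
    case 1
    then show ?thesis using \<open>0 < \<beta>\<close> assms by (simp add: rpow_def)
  next
    case 2
    then show ?thesis using \<open>0 < \<beta>\<close> by (simp add: rpow_def algebra_simps)
  next
    case 3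
    have "convex_on {0<..} (\<lambda>z::real. z powr (1 + \<beta>))"
      using powr_convex assms(1) by simp
    then have "t powr (1 + \<beta>) - u powr (1 + \<beta>) \<ge> (1 + \<beta>) * u powr \<beta> * (t - u)"
      using 3 by (intro convex_on_imp_above_tangent[where A = "{0<..}"])
        (auto intro!: derivative_eq_intros simp: interior_open)
    then show ?thesis using 3 pow[of t] pow[of u] by (simp add: rpow_eq_powr)
  qed
qed (simp add: rpow_def)

lemma exists_ge_average:
  fixes f :: "'s \<Rightarrow> real"
  assumes "finite T" "T \<noteq> {}"
  shows "\<exists>t\<in>T. (\<Sum>t\<in>T. f t) / card T \<le> f t"
proof (rule ccontr)
  assume "\<not> ?thesis"
  then have "(\<Sum>t\<in>T. f t) < (\<Sum>t\<in>T. (\<Sum>t\<in>T. f t) / card T)"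
    using assms by (intro sum_strict_mono) auto
  then show False using assms by simp
qed

definition move_flow :: "('s \<Rightarrow> real) \<Rightarrow> 's \<Rightarrow> 's \<Rightarrow> real \<Rightarrow> 's \<Rightarrow> real" where
  "move_flow f s s' \<delta> t = f t + \<delta> * (of_bool (t = s') - of_bool (t = s))"

lemma sum_move_flow:
  assumes "finite T"
  shows "(\<Sum>t\<in>T. w t * move_flow f s s' \<delta> t)
    = (\<Sum>t\<in>T. w t * f t) + \<delta> * (of_bool (s' \<in> T) * w s' - of_bool (s \<in> T) * w s)"
proof -
  have point: "(\<Sum>t\<in>T. w t * (\<delta> * of_bool (t = x))) = \<delta> * (of_bool (x \<in> T) * w x)" for x
  proof -
    have "(\<Sum>t\<in>T. w t * (\<delta> * of_bool (t = x))) = (\<Sum>t\<in>T. if t = x then \<delta> * w t else 0)"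
      by (intro sum.cong) auto
    then show ?thesis using assms by simp
  qed
  show ?thesis
    unfolding move_flow_def ring_distribs sum.distrib sum_subtractf point by simp
qed

locale congestion_game =
  fixes A :: "'a set" and K :: nat and S :: "nat \<Rightarrow> 's set" and r :: "'a \<Rightarrow> 's \<Rightarrow> real"
  assumes finite_resources: "finite A"
    and groups_exist: "K \<ge> 1"
    and finite_groups: "\<forall>k<K. finite (S k) \<and> S k \<noteq> {}"
    and disjoint_groups: "\<forall>k<K. \<forall>l<K. k \<noteq> l \<longrightarrow> S k \<inter> S l = {}"
    and consumption_nonneg: "\<forall>a\<in>A. \<forall>s\<in>strategies K S. r a s \<ge> 0"
    and strategy_consumes: "\<forall>s\<in>strategies K S. (\<Sum>a\<in>A. r a s) > 0"
begin

lemma group_subset_strategies: "k < K \<Longrightarrow> S k \<subseteq> strategies K S"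
  unfolding strategies_def by blast

lemma finite_strategies: "finite (strategies K S)"
  using finite_groups unfolding strategies_def by auto

lemma strategies_nonempty: "strategies K S \<noteq> {}"
  using finite_groups groups_exist group_subset_strategies[of 0] by auto

lemma exists_consumed_resource:
  assumes "s \<in> strategies K S"
  obtains a where "a \<in> A" "r a s > 0"
  using strategy_consumes assms by (metis not_less sum_nonpos)

lemma load_nonneg: "feasible K S d f \<Longrightarrow> a \<in> A \<Longrightarrow> 0 \<le> load K S r f a"
  using consumption_nonneg unfolding load_def feasible_def by (auto intro!: sum_nonneg)

lemma flow_le_load:
  assumes "feasible K S d f" "a \<in> A" "s \<in> strategies K S"
  shows "r a s * f s \<le> load K S r f a"
  using assms consumption_nonneg finite_strategies unfolding load_def feasible_def
  by (intro member_le_sum mult_nonneg_nonneg) auto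

lemma load_move_flow:
  assumes "s \<in> strategies K S" "s' \<in> strategies K S"
  shows "load K S r (move_flow f s s' \<delta>) a = load K S r f a + \<delta> * (r a s' - r a s)"
  using assms finite_strategies unfolding load_def by (simp add: sum_move_flow)

lemma feasible_move_flow:
  assumes "feasible K S d f" "k < K" "s \<in> S k" "s' \<in> S k" "0 \<le> \<delta>" "\<delta> \<le> f s"
  shows "feasible K S d (move_flow f s s' \<delta>)"
  unfolding feasible_def
proof (intro conjI allI ballI impI)
  fix t assume "t \<in> strategies K S"
  then show "move_flow f s s' \<delta> t \<ge> 0"
    using assms unfolding feasible_def move_flow_def by auto
next
  fix l assume "l < K"
  have "s \<in> S l \<longleftrightarrow> s' \<in> S l" using disjoint_groups assms(2-4) \<open>l < K\<close> by blast
  then show "(\<Sum>t\<in>S l. move_flow f s s' \<delta> t) = d l"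
    using sum_move_flow[of "S l" "\<lambda>_. 1"] finite_groups assms(1) \<open>l < K\<close>
    unfolding feasible_def by simp
qed

lemma exists_flow_ge_share:
  assumes "feasible K S d f" "k < K"
  obtains s where "s \<in> S k" "d k / card (S k) \<le> f s"
  using exists_ge_average[of "S k" f] finite_groups assms unfolding feasible_def by auto

end


locale polynomial_price_game = congestion_game A K S r
  for A :: "'a set" and K S and r :: "'a \<Rightarrow> 's \<Rightarrow> real" +
  fixes \<gamma> \<eta> :: "'a \<Rightarrow> real" and \<beta> :: real and \<tau> :: "'a \<Rightarrow> real \<Rightarrow> real"
  assumes gamma_pos: "\<forall>a\<in>A. \<gamma> a > 0"
    and eta_nonneg: "\<forall>a\<in>A. \<eta> a \<ge> 0"
    and beta_nonneg: "\<beta> \<ge> 0"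
    and tau_eq: "\<forall>a\<in>A. \<forall>t\<ge>0. \<tau> a t = \<gamma> a * rpow t \<beta> + \<eta> a"
begin

text \<open>The derivative of the resource cost \<open>t \<tau>\<^sub>a(t)\<close>.\<close>
definition marginal_cost :: "'a \<Rightarrow> real \<Rightarrow> real" where
  "marginal_cost a t = (1 + \<beta>) * \<gamma> a * rpow t \<beta> + \<eta> a"

definition marginal_price :: "('s \<Rightarrow> real) \<Rightarrow> 's \<Rightarrow> real" where
  "marginal_price f s = (\<Sum>a\<in>A. r a s * marginal_cost a (load K S r f a))"

definition fixed_price :: "'s \<Rightarrow> real" where
  "fixed_price s = (\<Sum>a\<in>A. r a s * \<eta> a)"

lemma gamma_nonneg: "a \<in> A \<Longrightarrow> 0 \<le> \<gamma> a"
  using gamma_pos by (simp add: less_imp_le)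

lemma fixed_price_nonneg: "s \<in> strategies K S \<Longrightarrow> 0 \<le> fixed_price s"
  using consumption_nonneg eta_nonneg unfolding fixed_price_def
  by (intro sum_nonneg mult_nonneg_nonneg) auto

lemma resource_cost_above_tangent:
  assumes "a \<in> A" "0 \<le> t" "0 \<le> u"
  shows "u * \<tau> a u + marginal_cost a u * (t - u) \<le> t * \<tau> a t"
proof -
  have "\<gamma> a * (u * rpow u \<beta> + (1 + \<beta>) * rpow u \<beta> * (t - u)) \<le> \<gamma> a * (t * rpow t \<beta>)"
    using mult_rpow_above_tangent[OF beta_nonneg assms(2,3)] gamma_pos assms(1)
    by (intro mult_left_mono) auto
  then show ?thesis using tau_eq assms unfolding marginal_cost_def by (simp add: algebra_simps)
qed

lemma strat_price_eq:
  assumes "feasible K S d f"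
  shows "strat_price A K S r \<tau> f s = (\<Sum>a\<in>A. r a s * (\<gamma> a * rpow (load K S r f a) \<beta> + \<eta> a))"
  unfolding strat_price_def using tau_eq load_nonneg[OF assms] by (intro sum.cong) auto

lemma marginal_price_eq:
  assumes "feasible K S d f"
  shows "marginal_price f s = (1 + \<beta>) * strat_price A K S r \<tau> f s - \<beta> * fixed_price s"
  unfolding marginal_price_def marginal_cost_def strat_price_eq[OF assms] fixed_price_def
  by (simp add: sum_distrib_left sum_subtractf[symmetric] algebra_simps)

lemma fixed_price_le_strat_price:
  assumes "feasible K S d f" "s \<in> strategies K S"
  shows "fixed_price s \<le> strat_price A K S r \<tau> f s"
  unfolding strat_price_eq[OF assms(1)] fixed_price_def
  using assms consumption_nonneg gamma_pos load_nonneg[OF assms(1)]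
  by (intro sum_mono mult_left_mono) (auto intro!: mult_nonneg_nonneg rpow_nonneg gamma_nonneg)

lemma strat_price_ge_flow:
  assumes "feasible K S d f" "s \<in> strategies K S" "a \<in> A"
  shows "r a s * \<gamma> a * rpow (r a s * f s) \<beta> \<le> strat_price A K S r \<tau> f s"
proof -
  have "r a s * \<gamma> a * rpow (r a s * f s) \<beta> \<le> r a s * (\<gamma> a * rpow (load K S r f a) \<beta> + \<eta> a)"
    using assms consumption_nonneg gamma_pos eta_nonneg flow_le_load[OF assms(1,3,2)]
    unfolding feasible_def
    by (auto simp: mult.assoc intro!: mult_left_mono rpow_mono beta_nonneg add_increasing2)
  also have "\<dots> \<le> strat_price A K S r \<tau> f s"
    unfolding strat_price_eq[OF assms(1)]
    using assms consumption_nonneg gamma_pos eta_nonneg finite_resources load_nonneg[OF assms(1)]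
    by (intro member_le_sum mult_nonneg_nonneg add_nonneg_nonneg rpow_nonneg gamma_nonneg) auto
  finally show ?thesis .
qed


lemma SO_first_order:
  assumes "SO_profile A K S r \<tau> d f" "feasible K S d g"
  shows "0 \<le> (\<Sum>a\<in>A. marginal_cost a (load K S r g a) * (load K S r g a - load K S r f a))"
proof -
  have feas: "feasible K S d f" using assms(1) unfolding SO_profile_def by simp
  have "total_cost A K S r \<tau> f \<le> total_cost A K S r \<tau> g"
    using assms unfolding SO_profile_def by blast
  also have "\<dots> \<le> total_cost A K S r \<tau> f
      + (\<Sum>a\<in>A. marginal_cost a (load K S r g a) * (load K S r g a - load K S r f a))"
    unfolding total_cost_def sum.distrib[symmetric]
    using resource_cost_above_tangent load_nonneg[OF feas] load_nonneg[OF assms(2)]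
    by (intro sum_mono) (fastforce simp: algebra_simps)
  finally show ?thesis by simp
qed

text \<open>Moving a small amount \<open>\<delta>\<close> of flow from \<open>s\<close> to \<open>s'\<close> cannot decrease the cost; by
convexity the cost increase is at most \<open>\<delta> G(\<delta>)\<close>, and \<open>G(0)\<close> is the difference of marginal
prices.\<close>
lemma SO_marginal_price_le:
  assumes SO: "SO_profile A K S r \<tau> d f"
    and "k < K" "s \<in> S k" "s' \<in> S k" "0 < f s"
  shows "marginal_price f s \<le> marginal_price f s'"
proof -
  have feas: "feasible K S d f" using SO unfolding SO_profile_def by simp
  have strats: "s \<in> strategies K S" "s' \<in> strategies K S"
    using assms(2-4) group_subset_strategies by auto
  define x where "x a = load K S r f a" for a
  define D where "D a = r a s' - r a s" for a
  define G where "G \<delta> = (\<Sum>a\<in>A. marginal_cost a (x a + \<delta> * D a) * D a)" for \<delta>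
  have moved: "feasible K S d (move_flow f s s' \<delta>)"
    "load K S r (move_flow f s s' \<delta>) a = x a + \<delta> * D a" if "0 \<le> \<delta>" "\<delta> \<le> f s" for \<delta> a
    using feasible_move_flow[OF feas assms(2-4) that] load_move_flow[OF strats]
    unfolding x_def D_def by auto
  have small: "\<forall>\<^sub>F \<delta> in at_right 0. 0 < \<delta> \<and> \<delta> \<le> f s"
    using \<open>0 < f s\<close> by (auto simp: eventually_at_right_field)
  have "0 \<le> G \<delta>" if "0 < \<delta>" "\<delta> \<le> f s" for \<delta>
  proof -
    have "0 \<le> (\<Sum>a\<in>A. marginal_cost a (x a + \<delta> * D a) * (\<delta> * D a))"
      using SO_first_order[OF SO moved(1)] moved(2) that by (simp add: x_def)
    also have "\<dots> = \<delta> * G \<delta>"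
      unfolding G_def by (simp add: sum_distrib_left mult_ac)
    finally show ?thesis using that by (simp add: zero_le_mult_iff)
  qed
  then have "\<forall>\<^sub>F \<delta> in at_right 0. 0 \<le> G \<delta>"
    using small by (auto elim: eventually_mono)
  moreover have "(G \<longlongrightarrow> G 0) (at_right 0)"
  proof -
    have "((\<lambda>\<delta>. rpow (x a + \<delta> * D a) \<beta>) \<longlongrightarrow> rpow (x a + 0 * D a) \<beta>) (at_right 0)"
      if "a \<in> A" for a
      using small
      by (intro tendsto_rpow beta_nonneg tendsto_intros)
        (auto elim!: eventually_mono simp flip: moved(2) intro!: load_nonneg[OF moved(1)] that)
    then show ?thesis
      unfolding G_def marginal_cost_def by (intro tendsto_intros) auto
  qed
  ultimately have "0 \<le> G 0" by (intro tendsto_lowerbound) auto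
  then show ?thesis
    unfolding G_def D_def x_def marginal_price_def
    by (simp add: algebra_simps sum_subtractf)
qed


context
  fixes d f k s s'
  assumes SO: "SO_profile A K S r \<tau> d f"
    and group: "k < K" "s \<in> S k" "s' \<in> S k" and used: "0 < f s"
begin

private lemma SO_feasible: "feasible K S d f"
  using SO unfolding SO_profile_def by simp

private lemma fixed_prices_nonneg: "0 \<le> fixed_price s" "0 \<le> \<beta> * fixed_price s'"
proof -
  have "s \<in> strategies K S" "s' \<in> strategies K S"
    using group group_subset_strategies by auto
  then show "0 \<le> fixed_price s" "0 \<le> \<beta> * fixed_price s'"
    using fixed_price_nonneg beta_nonneg by auto
qed

private lemma SO_marginal_price_ineq:
  "(1 + \<beta>) * strat_price A K S r \<tau> f s - \<beta> * fixed_price s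
    \<le> (1 + \<beta>) * strat_price A K S r \<tau> f s' - \<beta> * fixed_price s'"
  using SO_marginal_price_le[OF SO group used] by (simp add: marginal_price_eq[OF SO_feasible])

lemma SO_strat_price_le_add:
  "strat_price A K S r \<tau> f s \<le> strat_price A K S r \<tau> f s' + fixed_price s"
proof -
  have "(1 + \<beta>) * (strat_price A K S r \<tau> f s - strat_price A K S r \<tau> f s' - fixed_price s) \<le> 0"
    using SO_marginal_price_ineq fixed_prices_nonneg by (simp add: algebra_simps)
  then show ?thesis using beta_nonneg by (simp add: mult_le_0_iff)
qed

lemma SO_strat_price_le_mult:
  "strat_price A K S r \<tau> f s \<le> (1 + \<beta>) * strat_price A K S r \<tau> f s'"
proof -
  have "\<beta> * fixed_price s \<le> \<beta> * strat_price A K S r \<tau> f s"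
    using fixed_price_le_strat_price[OF SO_feasible] group group_subset_strategies beta_nonneg
    by (intro mult_left_mono) auto
  then show ?thesis
    using SO_marginal_price_ineq fixed_prices_nonneg by (simp add: algebra_simps)
qed

end


definition price_floor :: real where
  "price_floor = Min ((\<lambda>(a, s). r a s * \<gamma> a * rpow (r a s) \<beta>)
     ` {(a, s) \<in> A \<times> strategies K S. 0 < r a s})"

lemma price_floor_le:
  assumes "a \<in> A" "s \<in> strategies K S" "0 < r a s"
  shows "price_floor \<le> r a s * \<gamma> a * rpow (r a s) \<beta>"
  unfolding price_floor_def using assms finite_resources finite_strategies
  by (intro Min_le) (auto intro: finite_subset[of _ "A \<times> strategies K S"])

lemma price_floor_pos: "0 < price_floor"
proof -
  obtain s where s: "s \<in> strategies K S" using strategies_nonempty by blast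
  then obtain a where "a \<in> A" "0 < r a s" by (rule exists_consumed_resource)
  then show ?thesis
    unfolding price_floor_def using s finite_resources finite_strategies gamma_pos
    by (subst Min_gr_iff) (auto intro: finite_subset[of _ "A \<times> strategies K S"] simp: rpow_eq_powr)
qed

lemma SO_strat_price_lower_bound:
  assumes SO: "SO_profile A K S r \<tau> d f"
    and "k < K" "s' \<in> S k" "0 < m" "m \<le> d k"
  shows "price_floor * (m / card (strategies K S)) powr \<beta> \<le> (1 + \<beta>) * strat_price A K S r \<tau> f s'"
proof -
  have feas: "feasible K S d f" using SO unfolding SO_profile_def by simp
  obtain s where s: "s \<in> S k" "d k / card (S k) \<le> f s"
    using exists_flow_ge_share[OF feas \<open>k < K\<close>] .
  have sT: "s \<in> strategies K S" using s \<open>k < K\<close> group_subset_strategies by auto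
  have "card (S k) \<le> card (strategies K S)" "0 < card (S k)"
    using finite_strategies finite_groups group_subset_strategies \<open>k < K\<close>
    by (auto intro: card_mono simp: card_gt_0_iff)
  then have share: "m / card (strategies K S) \<le> f s"
    using s assms(4,5) by (smt (verit) frac_le of_nat_0_less_iff of_nat_mono)
  moreover have "0 < m / card (strategies K S)"
    using assms(4) finite_strategies strategies_nonempty by (simp add: card_gt_0_iff)
  ultimately have "0 < f s" by linarith
  obtain a where a: "a \<in> A" "0 < r a s" using exists_consumed_resource[OF sT] .
  have "price_floor * (m / card (strategies K S)) powr \<beta> \<le> r a s * \<gamma> a * rpow (r a s) \<beta> * f s powr \<beta>"
    using price_floor_le[OF a(1) sT a(2)] price_floor_pos share \<open>0 < m / _\<close> beta_nonneg
    by (intro mult_mono powr_mono2) auto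
  also have "\<dots> = r a s * \<gamma> a * rpow (r a s * f s) \<beta>"
    using a \<open>0 < f s\<close> by (simp add: rpow_eq_powr powr_mult)
  also have "\<dots> \<le> strat_price A K S r \<tau> f s"
    by (rule strat_price_ge_flow[OF feas sT a(1)])
  also have "\<dots> \<le> (1 + \<beta>) * strat_price A K S r \<tau> f s'"
    by (rule SO_strat_price_le_mult[OF SO \<open>k < K\<close> s(1) \<open>s' \<in> S k\<close> \<open>0 < f s\<close>])
  finally show ?thesis .
qed


definition fixed_price_bound :: real where
  "fixed_price_bound = (\<Sum>s\<in>strategies K S. fixed_price s)"

lemma fixed_price_le_bound: "s \<in> strategies K S \<Longrightarrow> fixed_price s \<le> fixed_price_bound"
  unfolding fixed_price_bound_def using finite_strategies fixed_price_nonneg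
  by (intro member_le_sum) auto

lemma fixed_price_bound_nonneg: "0 \<le> fixed_price_bound"
  unfolding fixed_price_bound_def using fixed_price_nonneg by (intro sum_nonneg) auto

definition approx_constant :: real where
  "approx_constant =
     (1 + \<beta>) * (fixed_price_bound + 1) * card (strategies K S) powr \<beta> / price_floor"

lemma approx_constant_pos: "0 < approx_constant"
  unfolding approx_constant_def
  using beta_nonneg fixed_price_bound_nonneg price_floor_pos finite_strategies strategies_nonempty
  by (simp add: card_gt_0_iff)

lemma SO_approx_NE:
  assumes SO: "SO_profile A K S r \<tau> d f" and min_pos: "0 < Min (d ` {..<K})"
  shows "approx_NE_profile A K S r \<tau> d (approx_constant * Min (d ` {..<K}) powr - \<beta>) f"
  unfolding approx_NE_profile_def
proof (intro conjI allI impI ballI)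
  show "feasible K S d f" using SO unfolding SO_profile_def by simp
next
  fix k s s' assume group: "k < K" "s \<in> S k" "s' \<in> S k" and used: "0 < f s"
  define m where "m = Min (d ` {..<K})"
  define N where "N = real (card (strategies K S))"
  define L where "L = price_floor * (m / N) powr \<beta> / (1 + \<beta>)"
  define H where "H = fixed_price_bound"
  let ?p = "strat_price A K S r \<tau> f"
  have "0 < m" "0 < N"
    using min_pos finite_strategies strategies_nonempty by (auto simp: m_def N_def card_gt_0_iff)
  have "m \<le> d k" using group unfolding m_def by (intro Min_le) auto
  have "L \<le> ?p s'"
    using SO_strat_price_lower_bound[OF SO group(1,3) \<open>0 < m\<close> \<open>m \<le> d k\<close>] beta_nonneg
    by (simp add: L_def N_def field_simps)
  have "0 < L" using price_floor_pos \<open>0 < m\<close> \<open>0 < N\<close> beta_nonneg by (simp add: L_def)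
  have "?p s \<le> ?p s' + H"
    using SO_strat_price_le_add[OF SO group used] fixed_price_le_bound group
      group_subset_strategies unfolding H_def by fastforce
  also have "H \<le> (H + 1) / L * ?p s'"
  proof -
    have "(H + 1) / L * L \<le> (H + 1) / L * ?p s'"
      using \<open>L \<le> ?p s'\<close> \<open>0 < L\<close> fixed_price_bound_nonneg by (intro mult_left_mono) (auto simp: H_def)
    then show ?thesis using \<open>0 < L\<close> by simp
  qed
  also have "(H + 1) / L = approx_constant * m powr - \<beta>"
    using \<open>0 < m\<close> \<open>0 < N\<close>
    by (simp add: L_def H_def N_def approx_constant_def powr_divide powr_minus_divide)
  finally show "?p s \<le> (1 + approx_constant * Min (d ` {..<K}) powr - \<beta>) * ?p s'"
    by (simp add: m_def algebra_simps)
qed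

end

theorem theorem5:
  fixes A :: "'a set" and K :: nat and S :: "nat \<Rightarrow> 's set"
    and r :: "'a \<Rightarrow> 's \<Rightarrow> real" and \<gamma> \<eta> :: "'a \<Rightarrow> real" and \<beta> :: real
    and \<tau> :: "'a \<Rightarrow> real \<Rightarrow> real"
  assumes finA: "finite A"
    and K_pos: "K \<ge> 1"
    and finS: "\<forall>k<K. finite (S k) \<and> S k \<noteq> {}"
    and disjS: "\<forall>k<K. \<forall>l<K. k \<noteq> l \<longrightarrow> S k \<inter> S l = {}"
    and r_nonneg: "\<forall>a\<in>A. \<forall>s\<in>strategies K S. r a s \<ge> 0"
    and r_strat: "\<forall>s\<in>strategies K S. (\<Sum>a\<in>A. r a s) > 0"
    and r_res: "\<forall>a\<in>A. (\<Sum>s\<in>strategies K S. r a s) > 0"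
    and gamma_pos: "\<forall>a\<in>A. \<gamma> a > 0"
    and eta_pos: "\<forall>a\<in>A. \<eta> a > 0"
    and beta_nonneg: "\<beta> \<ge> 0"
    and tau_def: "\<forall>a\<in>A. \<forall>t\<ge>0. \<tau> a t = \<gamma> a * rpow t \<beta> + \<eta> a"
  shows "\<exists>c>0. \<forall>d :: nat \<Rightarrow> real.
           (\<forall>k<K. d k \<ge> 0) \<longrightarrow> Min (d ` {..<K}) > 0 \<longrightarrow>
           (\<forall>f. SO_profile A K S r \<tau> d f \<longrightarrow>
                approx_NE_profile A K S r \<tau> d (c * Min (d ` {..<K}) powr (- \<beta>)) f)"
proof -
  interpret polynomial_price_game A K S r \<gamma> \<eta> \<beta> \<tau>
    using assms by unfold_locales (auto intro: less_imp_le)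
  show ?thesis using approx_constant_pos SO_approx_NE by blast
qed

end
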